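(* Let $(t_j^i)_{0\le j\le i}$ be real numbers and let $h_{j,k}^i$ ($0\le k\le i$, $0\le j\le i-k$) be defined by $h_{j,0}^i=t_j^i$ and $h_{j,k}^i=h_{j,k-1}^{i-1}+h_{j,k-1}^{i}+h_{j+1,k-1}^{i}$ for $k\ge 1$. Suppose that there is a constant $c$ with $t_0^i=c$ for all $i\ge 0$, and that Pascal's rule $t^i_{j}=t^{i-1}_{j-1}+t^{i-1}_{j}$ holds for all $i\ge 2$, $1\le j\le i-1$. Fix $j,k\ge 0$ and let $m=j+k+1$. Then the sequence $\{h_{j,k}^{i}\}_{i=j+k}^{\infty}$ satisfies the $m$-th order homogeneous linear recurrence $$\sum_{\ell=0}^{m}(-1)^{\ell}\binom{m}{\ell} h_{j,k}^{i+\ell}=0\qquad\text{for all } i\geq j+k.$$ *)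

theory Defs
  imports Complex_Main
begin

text \<open>The triangular array t is encoded as a function t i j (meaningful for j \<le> i).
  hh t i j k is h^i_{j,k}: h^i_{j,0} = t^i_j and
  h^i_{j,k} = h^{i-1}_{j,k-1} + h^i_{j,k-1} + h^i_{j+1,k-1} for k \<ge> 1.
  It is only meaningful for k \<le> i and j \<le> i - k; on that range the recursion
  only refers to entries in range.\<close>
fun hh :: "(nat \<Rightarrow> nat \<Rightarrow> real) \<Rightarrow> nat \<Rightarrow> nat \<Rightarrow> nat \<Rightarrow> real" where
  "hh t i j 0 = t i j"
| "hh t i j (Suc k) = hh t (i - 1) j k + hh t i j k + hh t i (j + 1) k"

end

theory Submission
  imports Defs
begin

text \<open>Up to the sign (-1)^n, bdiff n f i is the n-th forward difference of f at i, so
  the recurrence of the theorem says that the n-th difference of the sequence vanishes.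
  The first difference of column j+1 of a Pascal array is column j, and column 0 is
  constant; hence column j is annihilated by the (j+1)-st difference.  The recursion for
  h raises the order by one per step in k, and the backward shift i - 1 in it only
  delays the start index by one, which the induction on k absorbs.\<close>

definition bdiff :: "nat \<Rightarrow> (nat \<Rightarrow> 'a::comm_ring_1) \<Rightarrow> nat \<Rightarrow> 'a" where
  "bdiff n f i = (\<Sum>l = 0..n. (-1) ^ l * of_nat (n choose l) * f (i + l))"

definition bdiff_vanishes :: "nat \<Rightarrow> (nat \<Rightarrow> 'a::comm_ring_1) \<Rightarrow> nat \<Rightarrow> bool" where
  "bdiff_vanishes n f a \<longleftrightarrow> (\<forall>i \<ge> a. bdiff n f i = 0)"

lemma bdiff_Suc: "bdiff (Suc n) f i = bdiff n f i - bdiff n f (Suc i)"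
proof -
  \<comment> \<open>Pascal's rule for Suc n choose Suc l splits the shifted sum in two.\<close>
  have "bdiff (Suc n) f i = f i
      + (\<Sum>l = 0..n. (-1) ^ Suc l * of_nat (n choose Suc l) * f (i + Suc l))
      + (\<Sum>l = 0..n. (-1) ^ Suc l * of_nat (n choose l) * f (i + Suc l))"
    unfolding bdiff_def
    by (subst sum.atLeast0_atMost_Suc_shift) (simp add: sum.distrib[symmetric] algebra_simps)
  also have "f i + (\<Sum>l = 0..n. (-1) ^ Suc l * of_nat (n choose Suc l) * f (i + Suc l))
      = (\<Sum>l = 0..Suc n. (-1) ^ l * of_nat (n choose l) * f (i + l))"
    by (subst sum.atLeast0_atMost_Suc_shift) simp
  also have "\<dots> = bdiff n f i"
    unfolding bdiff_def by (simp add: binomial_eq_0)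
  also have "(\<Sum>l = 0..n. (-1) ^ Suc l * of_nat (n choose l) * f (i + Suc l)) = - bdiff n f (Suc i)"
    unfolding bdiff_def by (simp add: sum_negf[symmetric])
  finally show ?thesis by simp
qed

lemma bdiff_add: "bdiff n (\<lambda>i. f i + g i) i = bdiff n f i + bdiff n g i"
  unfolding bdiff_def by (simp add: sum.distrib algebra_simps)

lemma bdiff_diff: "bdiff n (\<lambda>i. f i - g i) i = bdiff n f i - bdiff n g i"
  unfolding bdiff_def by (simp add: sum_subtractf algebra_simps)

lemma bdiff_Suc_eq_bdiff_difference: "bdiff (Suc n) f i = - bdiff n (\<lambda>i. f (Suc i) - f i) i"
proof -
  have "bdiff n f (Suc i) = bdiff n (\<lambda>i. f (Suc i)) i"
    unfolding bdiff_def by simp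
  then show ?thesis
    by (simp add: bdiff_Suc bdiff_diff)
qed

lemma bdiff_vanishes_Suc: "bdiff_vanishes n f a \<Longrightarrow> bdiff_vanishes (Suc n) f a"
  unfolding bdiff_vanishes_def by (simp add: bdiff_Suc)

lemma bdiff_vanishes_add:
  "bdiff_vanishes n f a \<Longrightarrow> bdiff_vanishes n g a \<Longrightarrow> bdiff_vanishes n (\<lambda>i. f i + g i) a"
  unfolding bdiff_vanishes_def by (simp add: bdiff_add)

lemma bdiff_vanishes_mono: "bdiff_vanishes n f a \<Longrightarrow> a \<le> b \<Longrightarrow> bdiff_vanishes n f b"
  unfolding bdiff_vanishes_def by simp

lemma bdiff_vanishes_cong:
  assumes "\<And>i. a \<le> i \<Longrightarrow> f i = g i" and "bdiff_vanishes n f a"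
  shows "bdiff_vanishes n g a"
proof -
  have "bdiff n f i = bdiff n g i" if "a \<le> i" for i
    unfolding bdiff_def using assms(1) that by (intro sum.cong) auto
  then show ?thesis
    using assms(2) unfolding bdiff_vanishes_def by simp
qed

lemma bdiff_vanishes_delay:
  assumes "bdiff_vanishes n f a"
  shows "bdiff_vanishes n (\<lambda>i. f (i - 1)) (Suc a)"
  unfolding bdiff_vanishes_def
proof (intro allI impI)
  fix i
  assume "Suc a \<le> i"
  then have "bdiff n (\<lambda>i. f (i - 1)) i = bdiff n f (i - 1)" and "a \<le> i - 1"
    unfolding bdiff_def by (auto intro: sum.cong)
  then show "bdiff n (\<lambda>i. f (i - 1)) i = 0"
    using assms unfolding bdiff_vanishes_def by simp
qed

lemma bdiff_vanishes_Suc_of_difference: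
  "bdiff_vanishes n (\<lambda>i. f (Suc i) - f i) a \<Longrightarrow> bdiff_vanishes (Suc n) f a"
  unfolding bdiff_vanishes_def by (simp add: bdiff_Suc_eq_bdiff_difference)

lemma bdiff_vanishes_const: "bdiff_vanishes (Suc n) (\<lambda>_. c) a"
  by (rule bdiff_vanishes_Suc_of_difference) (simp add: bdiff_vanishes_def bdiff_def)

lemma pascal_column_bdiff_vanishes:
  fixes t :: "nat \<Rightarrow> nat \<Rightarrow> 'a::comm_ring_1"
  assumes const: "\<And>i. t i 0 = c"
    and pascal: "\<And>i j. 2 \<le> i \<Longrightarrow> 1 \<le> j \<Longrightarrow> j \<le> i - 1 \<Longrightarrow>
                    t i j = t (i - 1) (j - 1) + t (i - 1) j"
  shows "bdiff_vanishes (Suc j) (\<lambda>i. t i j) j"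
proof (induction j)
  case 0
  show ?case
    using bdiff_vanishes_const[of 0 c 0] by (simp add: const)
next
  case (Suc j)
  have "t i j = t (Suc i) (Suc j) - t i (Suc j)" if "Suc j \<le> i" for i
    using pascal[of "Suc i" "Suc j"] that by simp
  moreover have "bdiff_vanishes (Suc j) (\<lambda>i. t i j) (Suc j)"
    using Suc.IH by (rule bdiff_vanishes_mono) simp
  ultimately have "bdiff_vanishes (Suc j) (\<lambda>i. t (Suc i) (Suc j) - t i (Suc j)) (Suc j)"
    by (rule bdiff_vanishes_cong)
  then show ?case
    by (rule bdiff_vanishes_Suc_of_difference)
qed

lemma hh_bdiff_vanishes:
  fixes t :: "nat \<Rightarrow> nat \<Rightarrow> real"
  assumes const: "\<And>i. t i 0 = c"
    and pascal: "\<And>i j. 2 \<le> i \<Longrightarrow> 1 \<le> j \<Longrightarrow> j \<le> i - 1 \<Longrightarrow>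
                    t i j = t (i - 1) (j - 1) + t (i - 1) j"
  shows "bdiff_vanishes (j + k + 1) (\<lambda>i. hh t i j k) (j + k)"
proof (induction k arbitrary: j)
  case 0
  show ?case
    using pascal_column_bdiff_vanishes[of t c, OF const pascal] by simp
next
  case (Suc k)
  let ?n = "j + Suc k + 1"
  have delayed: "bdiff_vanishes ?n (\<lambda>i. hh t (i - 1) j k) (j + Suc k)"
    using bdiff_vanishes_delay[OF bdiff_vanishes_Suc[OF Suc.IH[of j]]] by simp
  have same: "bdiff_vanishes ?n (\<lambda>i. hh t i j k) (j + Suc k)"
    using bdiff_vanishes_mono[OF bdiff_vanishes_Suc[OF Suc.IH[of j]]] by simp
  have next_column: "bdiff_vanishes ?n (\<lambda>i. hh t i (j + 1) k) (j + Suc k)"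
    using Suc.IH[of "j + 1"] by simp
  have "bdiff_vanishes ?n (\<lambda>i. hh t (i - 1) j k + hh t i j k + hh t i (j + 1) k) (j + Suc k)"
    by (intro bdiff_vanishes_add delayed same next_column)
  then show ?case
    by simp
qed

theorem theorem6:
  fixes t :: "nat \<Rightarrow> nat \<Rightarrow> real" and c :: real and j k :: nat
  assumes const: "\<And>i. t i 0 = c"
    and pascal: "\<And>i j. 2 \<le> i \<Longrightarrow> 1 \<le> j \<Longrightarrow> j \<le> i - 1 \<Longrightarrow>
                    t i j = t (i - 1) (j - 1) + t (i - 1) j"
  shows "\<forall>i \<ge> j + k. (\<Sum>l = 0..j + k + 1. (-1) ^ l * real ((j + k + 1) choose l) * hh t (i + l) j k) = 0"
  using hh_bdiff_vanishes[of t c j k, OF const pascal]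
  unfolding bdiff_vanishes_def bdiff_def by simp

end
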